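(* Let $\lambda>1$, $s'\in(0,1]$, $r\in\mathbb{R}$, $a=r+\ln s'$, and $0<b\le\frac{\lambda-1}{\lambda}e^{1/(\lambda-1)}-1$ with $(\lambda-1)[1-\ln(\lambda-1)+\ln(b+1)]\le a\le\lambda-(\lambda-1)\ln\lambda$. Let $x^*$ be the smallest positive solution of $x=x^\lambda e^{a-(b+1)x}$. For the system $x_{n+1}=s'y_n$, $y_{n+1}=x_n^{\lambda}e^{r-bx_{n+1}-x_n}$ ($n\ge0$) on $[0,\infty)^2$, let $E$ be the set of initial points $(x_0,y_0)\in[0,\infty)^2$ whose orbit converges to $(0,0)$, and let $E_0$ be the connected component of $E$ containing $(0,0)$. Then $E_0\subsetneq[0,x^* )\times[0,x^*/s')$. *)

theory Defs
  imports "HOL-Analysis.Analysis"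
begin

definition sysmap :: "real \<Rightarrow> real \<Rightarrow> real \<Rightarrow> real \<Rightarrow> real \<times> real \<Rightarrow> real \<times> real" where
  "sysmap lam s' r b p = (s' * snd p, (fst p) powr lam * exp (r - b * (s' * snd p) - fst p))"

definition basin0 :: "real \<Rightarrow> real \<Rightarrow> real \<Rightarrow> real \<Rightarrow> (real \<times> real) set" where
  "basin0 lam s' r b = {p. 0 \<le> fst p \<and> 0 \<le> snd p \<and>
      (\<lambda>n. (sysmap lam s' r b ^^ n) p) \<longlonglongrightarrow> (0, 0)}"

end

theory Submission
  imports Defs
begin

text \<open>
  With v = s' y, the quantity s' times the second coordinate of the image of (x, y) is
  w = x^\<lambda> exp(a - b v - x). The upper bound on a gives w \<le> \<lambda>, and since x^\<lambda> exp(-x)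
  increases on [0, \<lambda>], also w \<ge> x* whenever x* \<le> x \<le> \<lambda> and v \<le> x*. Hence the region
  {x, v \<in> [0, \<lambda>], max x v \<ge> x*} is forward invariant, and no orbit in it tends to the
  origin. The lower bound on a forces x* \<le> (\<lambda> - 1)/(b + 1) < \<lambda>, so within the basin this
  region separates the box {x < x*, v < x*} from the rest of the quadrant, and the component
  of the origin lies in the box. The inclusion is strict because (x* exp(-b x*/\<lambda>), 0) lies
  in the box but is mapped into the region.
\<close>

lemma powr_mult_exp_eq:
  fixes x lam c :: real
  assumes "0 < x"
  shows "x powr lam * exp c = exp (lam * ln x + c)"
  using assms by (simp add: powr_def exp_add mult.commute)

lemma powr_mult_exp_neg_mono:
  fixes lam x y :: real
  assumes "0 < x" "x \<le> y" "y \<le> lam"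
  shows "x powr lam * exp (- x) \<le> y powr lam * exp (- y)"
proof -
  have "ln (x / y) \<le> x / y - 1"
    using assms by (intro ln_le_minus_one) simp
  hence "y - x \<le> y * (ln y - ln x)"
    using assms by (simp add: ln_div field_simps)
  also have "\<dots> \<le> lam * (ln y - ln x)"
    using assms by (intro mult_right_mono) auto
  finally have "lam * ln x - x \<le> lam * ln y - y"
    by (simp add: algebra_simps)
  thus ?thesis
    using assms by (simp add: powr_mult_exp_eq)
qed

lemma powr_mult_exp_le_lam:
  fixes lam a x :: real
  assumes lam: "lam > 1" and a_hi: "a \<le> lam - (lam - 1) * ln lam" and "0 \<le> x"
  shows "x powr lam * exp (a - x) \<le> lam"
proof (cases "x = 0")
  case True
  thus ?thesis using lam by simp
next
  case False
  with \<open>0 \<le> x\<close> have x: "x > 0" by simp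
  have "ln (x / lam) \<le> x / lam - 1"
    using x lam by (intro ln_le_minus_one) simp
  hence "lam * ln (x / lam) \<le> x - lam"
    using lam by (simp add: field_simps)
  hence "lam * ln x + (a - x) \<le> ln lam"
    using x lam a_hi by (simp add: ln_div algebra_simps)
  hence "x powr lam * exp (a - x) \<le> exp (ln lam)"
    using x by (simp add: powr_mult_exp_eq)
  thus ?thesis using lam by simp
qed

lemma smallest_fixed_point_le:
  fixes lam a b xs :: real
  assumes lam: "lam > 1" and b: "0 \<le> b"
    and a_lo: "(lam - 1) * (1 - ln (lam - 1) + ln (b + 1)) \<le> a"
    and xs_min: "\<And>x. 0 < x \<Longrightarrow> x < xs \<Longrightarrow> x \<noteq> x powr lam * exp (a - (b + 1) * x)"
  shows "xs \<le> (lam - 1) / (b + 1)"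
proof (rule ccontr)
  assume xs_gt: "\<not> ?thesis"
  define g where "g x = x powr lam * exp (a - (b + 1) * x) - x" for x
  define c where "c = (lam - 1) / (b + 1)"
  have c: "c > 0" "(b + 1) * c = lam - 1" "ln c = ln (lam - 1) - ln (b + 1)"
    using lam b by (simp_all add: c_def ln_div)
  have "lam * ln c - ln c = (lam - 1) * (ln (lam - 1) - ln (b + 1))"
    by (simp add: c(3) algebra_simps)
  moreover have "(lam - 1) * (1 - ln (lam - 1) + ln (b + 1))
      = (lam - 1) - (lam - 1) * (ln (lam - 1) - ln (b + 1))"
    by (simp add: algebra_simps)
  ultimately have "ln c \<le> lam * ln c + (a - (b + 1) * c)"
    using a_lo c(2) by linarith
  hence "g c \<ge> 0"
    unfolding g_def powr_mult_exp_eq[OF c(1)] using c(1)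
    by (metis diff_ge_0_iff_ge exp_le_cancel_iff exp_ln)
  \<comment> \<open>Near 0 the term x powr lam is negligible against x because lam > 1.\<close>
  define e where "e = min c (exp (- (\<bar>a\<bar> + 1) / (lam - 1)))"
  have e: "0 < e" "e \<le> c"
    using c by (simp_all add: e_def)
  have "ln e \<le> - (\<bar>a\<bar> + 1) / (lam - 1)"
    using e(1) ln_le_cancel_iff[of e "exp (- (\<bar>a\<bar> + 1) / (lam - 1))"] by (simp add: e_def)
  hence "(lam - 1) * ln e \<le> - (\<bar>a\<bar> + 1)"
    using lam by (simp add: field_simps)
  moreover have "0 \<le> b * e" "(b + 1) * e = b * e + e" "(lam - 1) * ln e = lam * ln e - ln e"
    using b e by (simp_all add: algebra_simps)
  ultimately have "lam * ln e + (a - (b + 1) * e) < ln e"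
    using e(1) abs_ge_self[of a] by linarith
  hence "g e < 0"
    unfolding g_def powr_mult_exp_eq[OF e(1)] using e(1)
    by (metis diff_less_0_iff_less exp_less_cancel_iff exp_ln)
  have "continuous_on {e..c} g"
    unfolding g_def using e by (intro continuous_intros) auto
  then obtain x where x: "e \<le> x" "x \<le> c" "g x = 0"
    using IVT'[of g e 0 c] \<open>g e < 0\<close> \<open>g c \<ge> 0\<close> e by auto
  have "0 < x" "x < xs"
    using x e xs_gt by (simp_all add: c_def)
  with xs_min x(3) show False
    unfolding g_def by force
qed

lemma tendsto_zero_eventually_below:
  fixes X :: "nat \<Rightarrow> real \<times> real" and s' c :: real
  assumes "X \<longlonglongrightarrow> (0, 0)" and "0 < c"
  shows "eventually (\<lambda>n. fst (X n) < c \<and> s' * snd (X n) < c) sequentially"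
proof -
  have "open {p :: real \<times> real. fst p < c \<and> s' * snd p < c}"
    by (intro open_Collect_conj open_Collect_less continuous_intros)
  with assms show ?thesis
    using topological_tendstoD[of X "(0, 0)" sequentially] by fastforce
qed

lemma connected_component_subset_separation:
  fixes S U V :: "'a :: topological_space set"
  assumes "open U" "open V" "U \<inter> V = {}" "S \<subseteq> U \<union> V" "x \<in> U"
  shows "connected_component_set S x \<subseteq> U"
proof -
  let ?C = "connected_component_set S x"
  have "U \<inter> ?C = {} \<or> V \<inter> ?C = {}"
    using assms connected_component_subset[of S x]
    by (intro connectedD connected_connected_component) auto
  moreover have "x \<in> U \<inter> ?C" if "?C \<noteq> {}"
    using that assms(5) connected_component_eq_empty[of S x] by auto
  ultimately show ?thesis
    using assms(4) connected_component_subset[of S x] by blast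
qed

locale planar_ricker =
  fixes lam s' r a b xs :: real
  assumes lam: "lam > 1"
    and s': "0 < s'"
    and a_def: "a = r + ln s'"
    and b: "0 \<le> b"
    and a_hi: "a \<le> lam - (lam - 1) * ln lam"
    and xs_pos: "xs > 0"
    and xs_sol: "xs = xs powr lam * exp (a - (b + 1) * xs)"
begin

abbreviation T :: "real \<times> real \<Rightarrow> real \<times> real" where
  "T \<equiv> sysmap lam s' r b"

definition trapping_region :: "(real \<times> real) set" where
  "trapping_region = {p. 0 \<le> fst p \<and> fst p \<le> lam \<and> 0 \<le> s' * snd p \<and> s' * snd p \<le> lam
      \<and> (xs \<le> fst p \<or> xs \<le> s' * snd p)}"

lemma T_Pair:
  "T (x, y) = (s' * y, (x powr lam * exp (a - b * (s' * y) - x)) / s')"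
  using s' by (simp add: sysmap_def a_def exp_diff exp_add)

lemma fixed_point_le_powr_exp:
  assumes "xs \<le> x" "x \<le> lam" "v \<le> xs"
  shows "xs \<le> x powr lam * exp (a - b * v - x)"
proof -
  have "xs = exp (a - b * xs) * (xs powr lam * exp (- xs))"
    by (subst xs_sol) (simp add: exp_add[symmetric] algebra_simps)
  also have "\<dots> \<le> exp (a - b * v) * (x powr lam * exp (- x))"
    using assms xs_pos b
    by (intro mult_mono powr_mult_exp_neg_mono) (auto intro: mult_left_mono)
  also have "\<dots> = x powr lam * exp (a - b * v - x)"
    by (simp add: exp_add[symmetric] algebra_simps)
  finally show ?thesis .
qed

lemma T_trapping_region:
  assumes "p \<in> trapping_region"
  shows "T p \<in> trapping_region"
proof -
  obtain x y where p: "p = (x, y)"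
    by fastforce
  define v where "v = s' * y"
  define w where "w = x powr lam * exp (a - b * v - x)"
  have xv: "0 \<le> x" "x \<le> lam" "0 \<le> v" "v \<le> lam" "xs \<le> x \<or> xs \<le> v"
    using assms by (auto simp: trapping_region_def p v_def)
  have "w \<le> x powr lam * exp (a - x)"
    using b xv(3) by (simp add: w_def mult_left_mono)
  also have "\<dots> \<le> lam"
    using powr_mult_exp_le_lam[OF lam a_hi xv(1)] .
  finally have "w \<le> lam" .
  moreover have "xs \<le> v \<or> xs \<le> w"
    using fixed_point_le_powr_exp[of x v] xv by (cases "xs \<le> v") (auto simp: w_def)
  moreover have "T p = (v, w / s')"
    by (simp add: p T_Pair v_def w_def)
  ultimately show ?thesis
    using xv s' lam by (simp add: trapping_region_def w_def)
qed

lemma funpow_T_trapping_region: "p \<in> trapping_region \<Longrightarrow> (T ^^ n) p \<in> trapping_region"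
  by (induction n) (simp_all add: T_trapping_region)

lemma not_in_basin0_if_enters_trapping_region:
  assumes "(T ^^ k) p \<in> trapping_region"
  shows "p \<notin> basin0 lam s' r b"
proof
  assume "p \<in> basin0 lam s' r b"
  hence "(\<lambda>n. (T ^^ n) p) \<longlonglongrightarrow> (0, 0)"
    by (simp add: basin0_def)
  hence "(\<lambda>n. (T ^^ (n + k)) p) \<longlonglongrightarrow> (0, 0)"
    by (rule LIMSEQ_ignore_initial_segment)
  from tendsto_zero_eventually_below[OF this xs_pos, of s'] obtain n
    where "fst ((T ^^ (n + k)) p) < xs" "s' * snd ((T ^^ (n + k)) p) < xs"
    by (auto simp: eventually_sequentially)
  moreover have "(T ^^ (n + k)) p \<in> trapping_region"
    using funpow_T_trapping_region[OF assms, of n] by (simp add: funpow_add)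
  ultimately show False
    by (auto simp: trapping_region_def)
qed

lemma basin0_subset_separation:
  assumes "xs \<le> lam"
  shows "basin0 lam s' r b
    \<subseteq> {p. fst p < xs \<and> s' * snd p < xs} \<union> {p. xs < fst p \<or> xs < s' * snd p}"
proof
  fix p
  assume p: "p \<in> basin0 lam s' r b"
  hence "0 \<le> fst p" "0 \<le> s' * snd p"
    using s' by (auto simp: basin0_def)
  moreover have "p \<notin> trapping_region"
    using not_in_basin0_if_enters_trapping_region[of 0 p] p by auto
  ultimately show "p \<in> {p. fst p < xs \<and> s' * snd p < xs} \<union> {p. xs < fst p \<or> xs < s' * snd p}"
    using assms by (auto simp: trapping_region_def)
qed

lemma T_axis_point_in_trapping_region: "T (xs * exp (- b * xs / lam), 0) \<in> trapping_region"
proof -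
  define x0 where "x0 = xs * exp (- b * xs / lam)"
  have x0: "0 < x0" "x0 \<le> xs"
    using xs_pos b lam by (simp_all add: x0_def mult_nonneg_nonneg)
  \<comment> \<open>x0 is chosen so that x0 powr lam = xs powr lam * exp (- b * xs).\<close>
  have "lam * ln x0 = lam * ln xs - b * xs"
    using xs_pos lam by (simp add: x0_def ln_mult field_simps)
  hence "x0 powr lam * exp (a - xs) = xs powr lam * exp (a - (b + 1) * xs)"
    using xs_pos x0(1) by (simp add: powr_mult_exp_eq algebra_simps)
  hence "xs = x0 powr lam * exp (a - xs)"
    using xs_sol by simp
  also have "\<dots> \<le> x0 powr lam * exp (a - x0)"
    using x0 by (intro mult_left_mono) auto
  finally have "xs \<le> x0 powr lam * exp (a - x0)" .
  moreover have "x0 powr lam * exp (a - x0) \<le> lam"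
    using powr_mult_exp_le_lam[OF lam a_hi] x0 by simp
  ultimately have "T (x0, 0) \<in> trapping_region"
    using s' lam by (simp add: T_Pair trapping_region_def)
  thus ?thesis
    unfolding x0_def .
qed

end

theorem mainTheorem12:
  fixes lam s' r a b xs :: real
  assumes lam: "lam > 1"
    and s': "0 < s'" "s' \<le> 1"
    and a_def: "a = r + ln s'"
    and b: "0 < b" "b \<le> (lam - 1) / lam * exp (1 / (lam - 1)) - 1"
    and a_lo: "(lam - 1) * (1 - ln (lam - 1) + ln (b + 1)) \<le> a"
    and a_hi: "a \<le> lam - (lam - 1) * ln lam"
    and xs_pos: "xs > 0"
    and xs_sol: "xs = xs powr lam * exp (a - (b + 1) * xs)"
    and xs_min: "\<And>x. 0 < x \<Longrightarrow> x < xs \<Longrightarrow> x \<noteq> x powr lam * exp (a - (b + 1) * x)"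
  shows "connected_component_set (basin0 lam s' r b) (0, 0) \<subset> {0..<xs} \<times> {0..<xs / s'}"
proof -
  interpret ricker: planar_ricker lam s' r a b xs
    using lam s' a_def b a_hi xs_pos xs_sol by unfold_locales auto
  let ?E = "basin0 lam s' r b"
  have "xs \<le> (lam - 1) / (b + 1)"
    using smallest_fixed_point_le[OF lam _ a_lo xs_min] b by simp
  also have "\<dots> \<le> lam"
    using lam b mult_nonneg_nonneg[of lam b] by (simp add: divide_le_eq algebra_simps)
  finally have "?E \<subseteq> {p. fst p < xs \<and> s' * snd p < xs} \<union> {p. xs < fst p \<or> xs < s' * snd p}"
    by (rule ricker.basin0_subset_separation)
  moreover have "open {p :: real \<times> real. fst p < xs \<and> s' * snd p < xs}"
    "open {p :: real \<times> real. xs < fst p \<or> xs < s' * snd p}"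
    by (intro open_Collect_conj open_Collect_disj open_Collect_less continuous_intros)+
  ultimately have "connected_component_set ?E (0, 0) \<subseteq> {p. fst p < xs \<and> s' * snd p < xs}"
    using xs_pos by (intro connected_component_subset_separation) auto
  hence "connected_component_set ?E (0, 0) \<subseteq> {0..<xs} \<times> {0..<xs / s'}"
    using connected_component_subset[of ?E "(0, 0)"] s'
    by (fastforce simp: basin0_def field_simps)
  moreover have "(xs * exp (- b * xs / lam), 0) \<notin> connected_component_set ?E (0, 0)"
    using ricker.not_in_basin0_if_enters_trapping_region[of 1]
      ricker.T_axis_point_in_trapping_region
      connected_component_subset[of ?E "(0, 0)"] by auto
  moreover have "(xs * exp (- b * xs / lam), 0) \<in> {0..<xs} \<times> {0..<xs / s'}"
    using xs_pos b lam s' by (simp add: mult_nonneg_nonneg)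
  ultimately show ?thesis
    by blast
qed

end
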